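(* Let $\alpha_1,\alpha_2\in\mathbb{R}\setminus\{0\}$ with $\alpha_1\ne\alpha_2$. Then there exist $\varepsilon=\varepsilon(\alpha_1,\alpha_2)>0$ and $C=C(\alpha_1,\alpha_2)$ such that for all $s\in\mathbb{R}$, all $\frac12<b\le\frac23$, and all $\beta_1,\beta_2\in\mathbb{R}$ with $|\beta_2-\beta_1|\le\varepsilon$, \[ \|\partial_xw\|_{X^{\alpha_2,\beta_2}_{s,b-1}}\le C\|w\|_{X^{\alpha_1,\beta_1}_{s,b}}\quad\text{for all } w\in X^{\alpha_1,\beta_1}_{s,b}. \]
   Context: For $\alpha\ne0$, $\beta\in\mathbb{R}$ let $\phi^{\alpha,\beta}(\xi)=\alpha\xi^3-\beta\xi$ and $\langle x\rangle=1+|x|$. For $s,b\in\mathbb{R}$ the Fourier restriction space $X^{\alpha,\beta}_{s,b}$ is the completion of the Schwartz space $\mathscr{S}(\mathbb{R}^2)$ under the norm $\|w\|_{X^{\alpha,\beta}_{s,b}}=\|\langle\xi\rangle^s\langle\tau-\phi^{\alpha,\beta}(\xi)\rangle^b\widehat w(\xi,\tau)\|_{L^2(d\xi\,d\tau)}$, where $\widehat w$ is the space-time Fourier transform. *)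

theory Defs
  imports "HOL-Analysis.Analysis"
begin

text \<open>Japanese-bracket convention of the paper: 1 + |x|.\<close>
definition jbr :: "real \<Rightarrow> real" where
  "jbr x = 1 + \<bar>x\<bar>"

definition phi :: "real \<Rightarrow> real \<Rightarrow> real \<Rightarrow> real" where
  "phi \<alpha> \<beta> \<xi> = \<alpha> * \<xi> ^ 3 - \<beta> * \<xi>"

text \<open>Elements of X^{alpha,beta}_{s,b} are represented on the Fourier side:
  by Plancherel, the completion of the Schwartz space under the X-norm is
  (isometrically) the weighted L^2 space of space-time Fourier transforms
  w-hat(xi,tau).\<close>
definition X_sq :: "real \<Rightarrow> real \<Rightarrow> real \<Rightarrow> real \<Rightarrow> (real \<times> real \<Rightarrow> complex) \<Rightarrow> ennreal" where
  "X_sq \<alpha> \<beta> s b g =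
     (\<integral>\<^sup>+ p. ennreal ((jbr (fst p) powr s * jbr (snd p - phi \<alpha> \<beta> (fst p)) powr b
                          * cmod (g p)) ^ 2) \<partial>lborel)"

definition X_space :: "real \<Rightarrow> real \<Rightarrow> real \<Rightarrow> real \<Rightarrow> (real \<times> real \<Rightarrow> complex) set" where
  "X_space \<alpha> \<beta> s b = {g. g \<in> borel_measurable lborel \<and> X_sq \<alpha> \<beta> s b g < \<infinity>}"

definition X_norm :: "real \<Rightarrow> real \<Rightarrow> real \<Rightarrow> real \<Rightarrow> (real \<times> real \<Rightarrow> complex) \<Rightarrow> real" where
  "X_norm \<alpha> \<beta> s b g = sqrt (enn2real (X_sq \<alpha> \<beta> s b g))"

definition dx_hat :: "(real \<times> real \<Rightarrow> complex) \<Rightarrow> (real \<times> real \<Rightarrow> complex)" where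
  "dx_hat g = (\<lambda>p. \<i> * complex_of_real (fst p) * g p)"

end

theory Submission
  imports Defs
begin

text \<open>Write \<open>\<sigma>\<^sub>i = \<tau> - \<phi>\<^sub>i(\<xi>)\<close> for the two modulations. Their difference is
  \<open>(\<alpha>\<^sub>2 - \<alpha>\<^sub>1) \<xi>\<^sup>3 - (\<beta>\<^sub>2 - \<beta>\<^sub>1) \<xi>\<close>, so for \<open>|\<beta>\<^sub>2 - \<beta>\<^sub>1| \<le> 1\<close> the cubic
  term is bounded by \<open>|\<xi>| + \<langle>\<sigma>\<^sub>1\<rangle> + \<langle>\<sigma>\<^sub>2\<rangle>\<close>, which gives
  \<open>|\<xi>| \<le> C max(\<langle>\<sigma>\<^sub>1\<rangle>, \<langle>\<sigma>\<^sub>2\<rangle>)\<^sup>1\<^sup>/\<^sup>3 \<le> C \<langle>\<sigma>\<^sub>1\<rangle>\<^sup>b \<langle>\<sigma>\<^sub>2\<rangle>\<^sup>1\<^sup>-\<^sup>b\<close>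
  because both \<open>b\<close> and \<open>1 - b\<close> are at least \<open>1/3\<close>. Thus the symbol \<open>i\<xi>\<close> of
  \<open>\<partial>\<^sub>x\<close> is bounded pointwise by \<open>C\<close> times the ratio of the two weights, and the
  estimate follows by integrating.\<close>

definition cube_bound_const :: "real \<Rightarrow> real" where
  "cube_bound_const a = 4/a + (2/a) * (1 + 2/a)"

definition X_weight :: "real \<Rightarrow> real \<Rightarrow> real \<Rightarrow> real \<Rightarrow> real \<times> real \<Rightarrow> real" where
  "X_weight \<alpha> \<beta> s b p = jbr (fst p) powr s * jbr (snd p - phi \<alpha> \<beta> (fst p)) powr b"

lemma X_sq_eq_weighted:
  "X_sq \<alpha> \<beta> s b g = (\<integral>\<^sup>+ p. ennreal ((X_weight \<alpha> \<beta> s b p * cmod (g p))\<^sup>2) \<partial>lborel)"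
  unfolding X_sq_def X_weight_def ..

lemma jbr_ge_one: "jbr x \<ge> 1"
  unfolding jbr_def by simp

lemma X_weight_nonneg: "X_weight \<alpha> \<beta> s b p \<ge> 0"
  unfolding X_weight_def by simp

lemma X_weight_borel_measurable: "X_weight \<alpha> \<beta> s b \<in> borel_measurable borel"
proof -
  have "continuous_on UNIV (X_weight \<alpha> \<beta> s b)"
    unfolding X_weight_def jbr_def phi_def
    by (intro continuous_intros) (auto simp: add_pos_nonneg[THEN less_imp_neq, symmetric])
  then show ?thesis
    by (rule borel_measurable_continuous_onI)
qed

lemma X_norm_le_if_dominated:
  assumes g: "g \<in> X_space \<alpha>1 \<beta>1 s1 b1" and h: "h \<in> borel_measurable lborel" and "C \<ge> 0"
    and dom: "\<And>p. X_weight \<alpha>2 \<beta>2 s2 b2 p * cmod (h p) \<le> C * (X_weight \<alpha>1 \<beta>1 s1 b1 p * cmod (g p))"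
  shows "h \<in> X_space \<alpha>2 \<beta>2 s2 b2 \<and> X_norm \<alpha>2 \<beta>2 s2 b2 h \<le> C * X_norm \<alpha>1 \<beta>1 s1 b1 g"
proof -
  have g_meas: "g \<in> borel_measurable lborel" and g_fin: "X_sq \<alpha>1 \<beta>1 s1 b1 g < \<infinity>"
    using g unfolding X_space_def by auto
  have sq_dom: "(X_weight \<alpha>2 \<beta>2 s2 b2 p * cmod (h p))\<^sup>2
      \<le> C\<^sup>2 * (X_weight \<alpha>1 \<beta>1 s1 b1 p * cmod (g p))\<^sup>2" for p
  proof -
    have "(X_weight \<alpha>2 \<beta>2 s2 b2 p * cmod (h p))\<^sup>2 \<le> (C * (X_weight \<alpha>1 \<beta>1 s1 b1 p * cmod (g p)))\<^sup>2"
      by (intro power_mono dom) (simp add: X_weight_nonneg)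
    then show ?thesis
      by (simp add: power_mult_distrib)
  qed
  have integrand_meas:
    "(\<lambda>p. ennreal ((X_weight \<alpha>1 \<beta>1 s1 b1 p * cmod (g p))\<^sup>2)) \<in> borel_measurable lborel"
    using X_weight_borel_measurable g_meas by measurable
  have le: "X_sq \<alpha>2 \<beta>2 s2 b2 h \<le> ennreal (C\<^sup>2) * X_sq \<alpha>1 \<beta>1 s1 b1 g"
    unfolding X_sq_eq_weighted nn_integral_cmult[OF integrand_meas, symmetric]
    using sq_dom by (intro nn_integral_mono) (simp add: ennreal_mult[symmetric])
  have rhs_fin: "ennreal (C\<^sup>2) * X_sq \<alpha>1 \<beta>1 s1 b1 g < \<infinity>"
    using g_fin by (simp add: ennreal_mult_less_top)
  have "h \<in> X_space \<alpha>2 \<beta>2 s2 b2"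
    unfolding X_space_def using h le rhs_fin by auto
  moreover have "X_norm \<alpha>2 \<beta>2 s2 b2 h \<le> C * X_norm \<alpha>1 \<beta>1 s1 b1 g"
  proof -
    have "enn2real (X_sq \<alpha>2 \<beta>2 s2 b2 h) \<le> C\<^sup>2 * enn2real (X_sq \<alpha>1 \<beta>1 s1 b1 g)"
      using enn2real_mono[OF le] rhs_fin by (simp add: enn2real_mult)
    then have "X_norm \<alpha>2 \<beta>2 s2 b2 h \<le> sqrt (C\<^sup>2 * enn2real (X_sq \<alpha>1 \<beta>1 s1 b1 g))"
      unfolding X_norm_def by simp
    also have "\<dots> = C * X_norm \<alpha>1 \<beta>1 s1 b1 g"
      unfolding X_norm_def using \<open>C \<ge> 0\<close> by (simp add: real_sqrt_mult)
    finally show ?thesis .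
  qed
  ultimately show ?thesis ..
qed

lemma dx_hat_borel_measurable:
  assumes "g \<in> borel_measurable lborel"
  shows "dx_hat g \<in> borel_measurable lborel"
proof -
  have "(\<lambda>p::real \<times> real. \<i> * complex_of_real (fst p)) \<in> borel_measurable lborel"
    unfolding measurable_lborel2 by (intro borel_measurable_continuous_onI continuous_intros)
  then show ?thesis
    unfolding dx_hat_def using assms by (rule borel_measurable_times)
qed

lemma norm_dx_hat: "cmod (dx_hat g p) = \<bar>fst p\<bar> * cmod (g p)"
  unfolding dx_hat_def by (simp add: norm_mult)

lemma cube_le_if_cubic_minus_linear_le:
  fixes a x M :: real
  assumes a: "a > 0" and x: "x \<ge> 0" and M: "M \<ge> 1" and cubic: "a * x^3 - x \<le> 2 * M"
  shows "x^3 \<le> cube_bound_const a * M"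
proof (cases "x \<le> a * x^3 / 2")
  case True
  then have "x^3 \<le> (4/a) * M"
    using cubic a by (simp add: field_simps)
  moreover have "0 \<le> (2/a) * (1 + 2/a) * M"
    using a M by simp
  ultimately show ?thesis
    by (simp add: cube_bound_const_def distrib_right)
next
  case False
  then have "x * (a * x\<^sup>2) < x * 2"
    by (simp add: power3_eq_cube power2_eq_square algebra_simps)
  then have "a * x\<^sup>2 < 2"
    using x by (cases "x = 0") simp_all
  then have x2: "x\<^sup>2 \<le> 2/a"
    using a by (simp add: field_simps)
  have x1: "x \<le> 1 + 2/a"
  proof (cases "x \<le> 1")
    case True
    then show ?thesis using a by (simp add: add_increasing2)
  next
    case False
    then have "x \<le> x\<^sup>2" by (simp add: power2_eq_square)
    then show ?thesis using x2 by linarith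
  qed
  have "x^3 = x * x\<^sup>2"
    by (simp add: power3_eq_cube power2_eq_square)
  also have "\<dots> \<le> (1 + 2/a) * (2/a)"
    using mult_mono[OF x1 x2] x a by simp
  also have "\<dots> \<le> (2/a) * (1 + 2/a) * M"
    using mult_left_mono[OF M, of "(2/a) * (1 + 2/a)"] a by simp
  also have "\<dots> \<le> cube_bound_const a * M"
    using a M by (simp add: cube_bound_const_def distrib_right)
  finally show ?thesis .
qed

lemma max_powr_le_powr_mult_powr:
  fixes x y \<theta> b c :: real
  assumes "x \<ge> 1" "y \<ge> 1" "\<theta> \<le> b" "\<theta> \<le> c" "b \<ge> 0" "c \<ge> 0"
  shows "max x y powr \<theta> \<le> x powr b * y powr c"
proof (cases "y \<le> x")
  case True
  have "max x y powr \<theta> \<le> x powr b"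
    using True assms by (simp add: powr_mono)
  also have "\<dots> \<le> x powr b * y powr c"
    using assms ge_one_powr_ge_zero[of y c] by (simp add: mult_le_cancel_left1)
  finally show ?thesis .
next
  case False
  have "max x y powr \<theta> \<le> y powr c"
    using False assms by (simp add: powr_mono)
  also have "\<dots> \<le> x powr b * y powr c"
    using assms ge_one_powr_ge_zero[of x b] by (simp add: mult_le_cancel_right1)
  finally show ?thesis .
qed

lemma cube_powr_one_third:
  fixes x :: real
  assumes "x \<ge> 0"
  shows "(x^3) powr (1/3) = x"
proof (cases "x = 0")
  case False
  then have "(x^3) powr (1/3) = (x powr 3) powr (1/3)"
    using assms by (simp add: powr_realpow)
  also have "\<dots> = x"
    using assms by (simp only: powr_powr) simp
  finally show ?thesis .
qed simp

lemma abs_le_jbr_mult_jbr_powr: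
  fixes \<alpha>1 \<alpha>2 \<beta>1 \<beta>2 \<xi> \<tau> b :: real
  assumes "\<alpha>1 \<noteq> \<alpha>2" and "1/3 \<le> b" "b \<le> 2/3" and "\<bar>\<beta>2 - \<beta>1\<bar> \<le> 1"
  shows "\<bar>\<xi>\<bar> \<le> cube_bound_const \<bar>\<alpha>2 - \<alpha>1\<bar> powr (1/3)
           * (jbr (\<tau> - phi \<alpha>1 \<beta>1 \<xi>) powr b * jbr (\<tau> - phi \<alpha>2 \<beta>2 \<xi>) powr (1 - b))"
proof -
  define A where "A = \<bar>\<alpha>2 - \<alpha>1\<bar>"
  define K where "K = cube_bound_const A"
  define J1 where "J1 = jbr (\<tau> - phi \<alpha>1 \<beta>1 \<xi>)"
  define J2 where "J2 = jbr (\<tau> - phi \<alpha>2 \<beta>2 \<xi>)"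
  have A: "A > 0" and K: "K \<ge> 0"
    using assms unfolding A_def K_def cube_bound_const_def by simp_all
  have "(\<tau> - phi \<alpha>1 \<beta>1 \<xi>) - (\<tau> - phi \<alpha>2 \<beta>2 \<xi>) = (\<alpha>2 - \<alpha>1) * \<xi>^3 - (\<beta>2 - \<beta>1) * \<xi>"
    unfolding phi_def by (simp add: algebra_simps)
  moreover have "\<bar>(\<alpha>2 - \<alpha>1) * \<xi>^3\<bar> = A * \<bar>\<xi>\<bar>^3"
    unfolding A_def by (simp add: abs_mult power_abs)
  moreover have "\<bar>(\<beta>2 - \<beta>1) * \<xi>\<bar> \<le> \<bar>\<xi>\<bar>"
    using assms by (simp add: abs_mult mult_left_le_one_le)
  ultimately have "A * \<bar>\<xi>\<bar>^3 - \<bar>\<xi>\<bar> \<le> J1 + J2"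
    unfolding J1_def J2_def jbr_def by linarith
  also have "\<dots> \<le> 2 * max J1 J2"
    by linarith
  finally have "\<bar>\<xi>\<bar>^3 \<le> K * max J1 J2"
    unfolding K_def using A jbr_ge_one[of "\<tau> - phi \<alpha>1 \<beta>1 \<xi>"]
    by (intro cube_le_if_cubic_minus_linear_le) (auto simp: J1_def)
  then have "\<bar>\<xi>\<bar> \<le> (K * max J1 J2) powr (1/3)"
    using cube_powr_one_third[of "\<bar>\<xi>\<bar>"] powr_mono2[of "1/3" "\<bar>\<xi>\<bar>^3"] by simp
  also have "\<dots> = K powr (1/3) * max J1 J2 powr (1/3)"
    using K by (simp add: powr_mult)
  also have "\<dots> \<le> K powr (1/3) * (J1 powr b * J2 powr (1 - b))"
    using assms jbr_ge_one unfolding J1_def J2_def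
    by (intro mult_left_mono max_powr_le_powr_mult_powr) auto
  finally show ?thesis
    unfolding K_def A_def J1_def J2_def .
qed

lemma dx_multiplier_bound:
  fixes \<alpha>1 \<alpha>2 \<beta>1 \<beta>2 b :: real
  assumes "\<alpha>1 \<noteq> \<alpha>2" and "1/3 \<le> b" "b \<le> 2/3" and "\<bar>\<beta>2 - \<beta>1\<bar> \<le> 1"
  shows "X_weight \<alpha>2 \<beta>2 s (b - 1) p * cmod (dx_hat g p)
           \<le> cube_bound_const \<bar>\<alpha>2 - \<alpha>1\<bar> powr (1/3) * (X_weight \<alpha>1 \<beta>1 s b p * cmod (g p))"
proof -
  define K where "K = cube_bound_const \<bar>\<alpha>2 - \<alpha>1\<bar> powr (1/3)"
  define J1 where "J1 = jbr (snd p - phi \<alpha>1 \<beta>1 (fst p))"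
  define J2 where "J2 = jbr (snd p - phi \<alpha>2 \<beta>2 (fst p))"
  have J2: "J2 \<ge> 1"
    unfolding J2_def by (rule jbr_ge_one)
  have "\<bar>fst p\<bar> * J2 powr (b - 1) \<le> K * (J1 powr b * J2 powr (1 - b)) * J2 powr (b - 1)"
    using abs_le_jbr_mult_jbr_powr[OF assms, of "fst p" "snd p"]
    unfolding K_def J1_def J2_def by (intro mult_right_mono) auto
  also have "\<dots> = K * J1 powr b * (J2 powr (1 - b) * J2 powr (b - 1))"
    by (simp add: mult_ac)
  also have "J2 powr (1 - b) * J2 powr (b - 1) = 1"
    using J2 by (simp add: powr_add[symmetric])
  finally have multiplier: "\<bar>fst p\<bar> * J2 powr (b - 1) \<le> K * J1 powr b"
    by simp
  have "X_weight \<alpha>2 \<beta>2 s (b - 1) p * cmod (dx_hat g p)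
      = (jbr (fst p) powr s * cmod (g p)) * (\<bar>fst p\<bar> * J2 powr (b - 1))"
    by (simp add: X_weight_def norm_dx_hat J2_def mult_ac)
  also have "\<dots> \<le> (jbr (fst p) powr s * cmod (g p)) * (K * J1 powr b)"
    by (intro mult_left_mono multiplier) simp
  also have "\<dots> = K * (X_weight \<alpha>1 \<beta>1 s b p * cmod (g p))"
    by (simp add: X_weight_def J1_def mult_ac)
  finally show ?thesis
    unfolding K_def .
qed

theorem lemma2p2:
  fixes \<alpha>1 \<alpha>2 :: real
  assumes "\<alpha>1 \<noteq> 0" and "\<alpha>2 \<noteq> 0" and "\<alpha>1 \<noteq> \<alpha>2"
  shows "\<exists>\<epsilon>>0. \<exists>C::real. \<forall>s b \<beta>1 \<beta>2 :: real.
           1/2 < b \<and> b \<le> 2/3 \<and> \<bar>\<beta>2 - \<beta>1\<bar> \<le> \<epsilon> \<longrightarrow>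
           (\<forall>g \<in> X_space \<alpha>1 \<beta>1 s b.
              dx_hat g \<in> X_space \<alpha>2 \<beta>2 s (b - 1) \<and>
              X_norm \<alpha>2 \<beta>2 s (b - 1) (dx_hat g) \<le> C * X_norm \<alpha>1 \<beta>1 s b g)"
proof -
  \<comment> \<open>\<open>\<epsilon> = 1\<close> works; only \<open>\<alpha>1 \<noteq> \<alpha>2\<close> is needed, not \<open>\<alpha>\<^sub>i \<noteq> 0\<close>.\<close>
  define C where "C = cube_bound_const \<bar>\<alpha>2 - \<alpha>1\<bar> powr (1/3)"
  have "dx_hat g \<in> X_space \<alpha>2 \<beta>2 s (b - 1) \<and>
        X_norm \<alpha>2 \<beta>2 s (b - 1) (dx_hat g) \<le> C * X_norm \<alpha>1 \<beta>1 s b g"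
    if "1/2 < b" "b \<le> 2/3" "\<bar>\<beta>2 - \<beta>1\<bar> \<le> 1" and g: "g \<in> X_space \<alpha>1 \<beta>1 s b"
    for s b \<beta>1 \<beta>2 g
  proof (rule X_norm_le_if_dominated[OF g])
    show "dx_hat g \<in> borel_measurable lborel"
      using g dx_hat_borel_measurable unfolding X_space_def by blast
    show "C \<ge> 0"
      unfolding C_def by simp
    show "X_weight \<alpha>2 \<beta>2 s (b - 1) p * cmod (dx_hat g p) \<le> C * (X_weight \<alpha>1 \<beta>1 s b p * cmod (g p))" for p
      unfolding C_def using that assms(3) by (intro dx_multiplier_bound) auto
  qed
  then show ?thesis
    by (intro exI[of _ 1] conjI exI[of _ C] allI impI ballI) auto
qed

end
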